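(* Let $h,w\ge 4$ and $G=C_w(U)\sqcap C_h$ where $U=\{i,i+1,i+2\}$ is a set of three consecutive vertices of $C_w$ (indices taken modulo $w$ in $\{1,\dots,w\}$). Then $Z(G)\le h+2$.
   Context: All graphs are finite, simple and undirected. Zero forcing: given a graph $G$ and a set $S\subseteq V(G)$ of initially filled vertices, the color change rule says that if a filled vertex $v$ has exactly one unfilled neighbor $u$, then $v$ forces $u$ to become filled. $S$ is a zero forcing set if repeatedly applying this rule eventually fills every vertex of $G$. The zero forcing number $Z(G)$ is the minimum cardinality of a zero forcing set of $G$. The cycle $C_n$ ($n\ge3$) has vertex set $\{1,\dots,n\}$ and edges $\{k,k+1\}$ for $1\le k\le n-1$ together with $\{n,1\}$. Generalized hierarchical product: for graphs $W,H$ and $U\subseteq V(W)$ (the root set), $W(U)\sqcap H$ is the graph with vertex set $V(W)\times V(H)$ in which $(x_1,y_1)$ and $(x_2,y_2)$ are adjacent iff either ($x_1=x_2\in U$ and $y_1y_2\in E(H)$) or ($y_1=y_2$ and $x_1x_2\in E(W)$). *)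

theory Defs
  imports Main
begin

definition cycle_adj :: "nat \<Rightarrow> nat \<Rightarrow> nat \<Rightarrow> bool" where
  "cycle_adj n x y \<longleftrightarrow> x \<in> {1..n} \<and> y \<in> {1..n} \<and>
     (y = x + 1 \<or> x = y + 1 \<or> (x = n \<and> y = 1) \<or> (x = 1 \<and> y = n))"

definition cycle_verts :: "nat \<Rightarrow> nat set" where
  "cycle_verts n = {1..n}"

definition hprod_verts :: "'a set \<Rightarrow> 'b set \<Rightarrow> ('a \<times> 'b) set" where
  "hprod_verts VW VH = VW \<times> VH"

definition hprod_adj :: "('a \<Rightarrow> 'a \<Rightarrow> bool) \<Rightarrow> 'a set \<Rightarrow> ('b \<Rightarrow> 'b \<Rightarrow> bool)
    \<Rightarrow> ('a \<times> 'b) \<Rightarrow> ('a \<times> 'b) \<Rightarrow> bool" where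
  "hprod_adj adjW U adjH p q \<longleftrightarrow>
     (fst p = fst q \<and> fst p \<in> U \<and> adjH (snd p) (snd q)) \<or>
     (snd p = snd q \<and> adjW (fst p) (fst q))"

inductive filled :: "'a set \<Rightarrow> ('a \<Rightarrow> 'a \<Rightarrow> bool) \<Rightarrow> 'a set \<Rightarrow> 'a \<Rightarrow> bool"
  for V adj S where
  init: "v \<in> S \<Longrightarrow> filled V adj S v"
| force: "\<lbrakk> filled V adj S v; v \<in> V; u \<in> V; adj v u;
           \<And>x. \<lbrakk> x \<in> V; adj v x; x \<noteq> u \<rbrakk> \<Longrightarrow> filled V adj S x \<rbrakk>
          \<Longrightarrow> filled V adj S u"

definition zero_forcing_set :: "'a set \<Rightarrow> ('a \<Rightarrow> 'a \<Rightarrow> bool) \<Rightarrow> 'a set \<Rightarrow> bool" where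
  "zero_forcing_set V adj S \<longleftrightarrow> S \<subseteq> V \<and> (\<forall>v\<in>V. filled V adj S v)"

definition zero_forcing_number :: "'a set \<Rightarrow> ('a \<Rightarrow> 'a \<Rightarrow> bool) \<Rightarrow> nat" where
  "zero_forcing_number V adj = (LEAST k. \<exists>S. zero_forcing_set V adj S \<and> card S = k)"

end

theory Submission imports Defs begin

text \<open>Number the columns of \<open>C\<^sub>w\<close> from \<open>i\<close> on, so that the roots are columns 0, 1, 2.
Seed all of column 2 together with rows 1 and 2 of column 1. In a row whose column-1 vertex is
filled, the column-2 vertex has all its vertical neighbours seeded, so it forces column 3, and
the forcing runs around the row through the non-root columns 3, \<dots>, w-1 up to column 0. Once
row y+1 is full and row y of column 1 is filled, the vertex in row y+1 of column 1 forces the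
one in row y+2, so column 1 fills from the bottom and every row fills with it.\<close>

definition forces :: "'a set \<Rightarrow> ('a \<Rightarrow> 'a \<Rightarrow> bool) \<Rightarrow> ('a \<Rightarrow> bool) \<Rightarrow> 'a \<Rightarrow> 'a \<Rightarrow> bool" where
  "forces V adj F v u \<longleftrightarrow> v \<in> V \<and> u \<in> V \<and> adj v u \<and> (\<forall>x\<in>V. adj v x \<longrightarrow> x \<noteq> u \<longrightarrow> F x)"

lemma filled_forces:
  assumes "filled V adj S v" and "forces V adj (filled V adj S) v u"
  shows "filled V adj S u"
  using assms unfolding forces_def by (blast intro: filled.force)

lemma filled_chain:
  assumes "filled V adj S (p 0)" and "filled V adj S (p 1)"
    and step: "\<And>k. k < n \<Longrightarrow> filled V adj S (p k) \<Longrightarrow> filled V adj S (p (Suc k)) \<Longrightarrow>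
                 forces V adj (filled V adj S) (p (Suc k)) (p (Suc (Suc k)))"
    and "k \<le> Suc n"
  shows "filled V adj S (p k)"
proof -
  have "filled V adj S (p m) \<and> filled V adj S (p (Suc m))" if "m \<le> n" for m
    using that
  proof (induction m)
    case 0
    then show ?case using assms(1,2) by simp
  next
    case (Suc m)
    then show ?case using step filled_forces by (metis Suc_le_lessD less_imp_le)
  qed
  then show ?thesis using \<open>k \<le> Suc n\<close> by (cases k) auto
qed

lemma zero_forcing_number_le_card:
  assumes "zero_forcing_set V adj S"
  shows "zero_forcing_number V adj \<le> card S"
  unfolding zero_forcing_number_def using assms by (blast intro: Least_le)

lemma cycle_adj_iff:
  assumes "(w::nat) \<ge> 3" "x \<in> {1..w}" "z \<in> {1..w}"
  shows "cycle_adj w x z \<longleftrightarrow> z = x mod w + 1 \<or> x = z mod w + 1"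
proof -
  have "y mod w + 1 = (if y = w then 1 else y + 1)" if "y \<in> {1..w}" for y
    using that by auto
  then show ?thesis unfolding cycle_adj_def using assms by auto
qed

definition cycle_shift :: "nat \<Rightarrow> nat \<Rightarrow> nat \<Rightarrow> nat" where
  "cycle_shift w i j = (i - 1 + j) mod w + 1"

lemma cycle_shift_in_range: "w > 0 \<Longrightarrow> cycle_shift w i j \<in> {1..w}"
  unfolding cycle_shift_def by (simp add: Suc_leI)

lemma cycle_shift_Suc: "w > 0 \<Longrightarrow> cycle_shift w i j mod w + 1 = cycle_shift w i (Suc j mod w)"
  unfolding cycle_shift_def by (simp add: mod_Suc_eq mod_add_right_eq)

lemma cycle_shift_inverse:
  assumes "i \<in> {1..w}" "j < w"
  shows "(cycle_shift w i j + w - i) mod w = j"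
proof -
  have "cycle_shift w i j + w - i = (i - 1 + j) mod w + (w + 1 - i)"
    using assms unfolding cycle_shift_def by auto
  then have "(cycle_shift w i j + w - i) mod w = (i - 1 + j + (w + 1 - i)) mod w"
    by (simp add: mod_add_left_eq)
  also have "i - 1 + j + (w + 1 - i) = j + w"
    using assms by auto
  finally show ?thesis using assms by simp
qed

lemma cycle_shift_eq_iff: "i \<in> {1..w} \<Longrightarrow> j < w \<Longrightarrow> k < w \<Longrightarrow> cycle_shift w i j = cycle_shift w i k \<longleftrightarrow> j = k"
  by (metis cycle_shift_inverse)

lemma cycle_shift_surj:
  assumes "i \<in> {1..w}" "x \<in> {1..w}"
  shows "\<exists>j<w. x = cycle_shift w i j"
proof (intro exI conjI)
  show "(x + w - i) mod w < w" using assms by auto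
  have "cycle_shift w i ((x + w - i) mod w) = (i - 1 + (x + w - i)) mod w + 1"
    unfolding cycle_shift_def by (simp add: mod_add_right_eq)
  also have "i - 1 + (x + w - i) = (x - 1) + w" using assms by auto
  finally show "x = cycle_shift w i ((x + w - i) mod w)" using assms by auto
qed

lemma cycle_adj_shift:
  assumes "w \<ge> 3" "i \<in> {1..w}" "j < w" "k < w"
  shows "cycle_adj w (cycle_shift w i j) (cycle_shift w i k) \<longleftrightarrow> k = Suc j mod w \<or> j = Suc k mod w"
proof -
  have "w > 0" using assms by auto
  have "cycle_adj w (cycle_shift w i j) (cycle_shift w i k) \<longleftrightarrow>
        cycle_shift w i k = cycle_shift w i (Suc j mod w) \<or> cycle_shift w i j = cycle_shift w i (Suc k mod w)"
    using cycle_adj_iff[OF assms(1) cycle_shift_in_range cycle_shift_in_range] cycle_shift_Suc \<open>w > 0\<close> by simp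
  also have "\<dots> \<longleftrightarrow> k = Suc j mod w \<or> j = Suc k mod w"
    using cycle_shift_eq_iff[OF assms(2)] assms \<open>w > 0\<close> by auto
  finally show ?thesis .
qed

context
  fixes w h i :: nat
  assumes h4: "h \<ge> 4" and w4: "w \<ge> 4" and i: "i \<in> {1..w}"
begin

abbreviation "c \<equiv> cycle_shift w i"
abbreviation "grid \<equiv> hprod_verts (cycle_verts w) (cycle_verts h)"
abbreviation "grid_adj \<equiv> hprod_adj (cycle_adj w) {c 0, c 1, c 2} (cycle_adj h)"
abbreviation "seed \<equiv> {c 2} \<times> {1..h} \<union> {(c 1, 1), (c 1, 2)}"
abbreviation "forced \<equiv> filled grid grid_adj seed"

lemma shift_in_grid_iff: "(c j, y) \<in> grid \<longleftrightarrow> y \<in> {1..h}"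
  using w4 cycle_shift_in_range[of w i j] by (simp add: hprod_verts_def cycle_verts_def)

lemma grid_cases:
  assumes "x \<in> grid"
  obtains k y where "k < w" "y \<in> {1..h}" "x = (c k, y)"
proof -
  obtain x' y where "x = (x', y)" "x' \<in> {1..w}" "y \<in> {1..h}"
    using assms by (auto simp: hprod_verts_def cycle_verts_def)
  then show thesis using cycle_shift_surj[OF i] that by blast
qed

lemma grid_adj_shift:
  assumes "j < w" "k < w"
  shows "grid_adj (c j, y) (c k, z) \<longleftrightarrow>
         (j = k \<and> j \<le> 2 \<and> cycle_adj h y z) \<or> (y = z \<and> (k = Suc j mod w \<or> j = Suc k mod w))"
proof -
  have "c j \<in> {c 0, c 1, c 2} \<longleftrightarrow> j \<le> 2"
    using cycle_shift_eq_iff[OF i] assms w4 by auto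
  then show ?thesis
    using cycle_shift_eq_iff[OF i assms] cycle_adj_shift[OF _ i assms] w4 unfolding hprod_adj_def by auto
qed

lemma forces_gridI:
  assumes "j < w" "k < w" "y \<in> {1..h}" "z \<in> {1..h}" "grid_adj (c j, y) (c k, z)"
    and others: "\<And>l y'. l < w \<Longrightarrow> y' \<in> {1..h} \<Longrightarrow> grid_adj (c j, y) (c l, y') \<Longrightarrow>
                   (l, y') \<noteq> (k, z) \<Longrightarrow> F (c l, y')"
  shows "forces grid grid_adj F (c j, y) (c k, z)"
  unfolding forces_def
proof (intro conjI ballI impI)
  fix x assume "x \<in> grid" "grid_adj (c j, y) x" "x \<noteq> (c k, z)"
  then show "F x" using others by (elim grid_cases) blast
qed (use assms shift_in_grid_iff in auto)

lemma row_forced: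
  assumes y: "y \<in> {1..h}" and "forced (c 1, y)" and "k < w"
  shows "forced (c k, y)"
proof -
  let ?p = "\<lambda>m. (c (Suc m mod w), y)" \<comment> \<open>columns 1, 2, \<dots>, w-1, 0 of row \<open>y\<close>\<close>
  have "forced (?p m)" if "m \<le> Suc (w - 2)" for m
  proof (rule filled_chain[where n = "w - 2", OF _ _ _ that])
    show "forced (?p 0)" using assms w4 by simp
    show "forced (?p 1)" using y w4 by (intro filled.init) (simp add: numeral_2_eq_2)
    fix m assume m: "m < w - 2" and "forced (?p m)"
    have j: "Suc (Suc m) mod w = m + 2" using m by simp
    show "forces grid grid_adj forced (?p (Suc m)) (?p (Suc (Suc m)))"
      unfolding j
    proof (rule forces_gridI)
      show "m + 2 < w" "Suc (Suc (Suc m)) mod w < w" using m by auto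
      show "grid_adj (c (m + 2), y) (c (Suc (Suc (Suc m)) mod w), y)"
        using grid_adj_shift m by auto
      fix l y' assume l: "l < w" "y' \<in> {1..h}" "grid_adj (c (m + 2), y) (c l, y')"
        and ne: "(l, y') \<noteq> (Suc (Suc (Suc m)) mod w, y)"
      have "Suc l mod w = m + 2 \<Longrightarrow> l = m + 1"
        using l(1) by (cases "Suc l = w") auto
      then consider "l = 2" | "l = m + 1" "y' = y"
        using l(3) grid_adj_shift[of "m + 2" l y y'] l(1) ne m by force
      then show "forced (c l, y')"
      proof cases
        case 1
        then show ?thesis using l(2) by (intro filled.init) simp
      next
        case 2
        then show ?thesis using \<open>forced (?p m)\<close> m by simp
      qed
    qed (use y in auto)
  qed
  moreover have "k = Suc ((k + w - 1) mod w) mod w"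
    using \<open>k < w\<close> w4 by (cases k) (auto simp: mod_Suc)
  moreover have "(k + w - 1) mod w \<le> Suc (w - 2)"
  proof -
    have "(k + w - 1) mod w < w" using w4 by simp
    then show ?thesis using w4 by linarith
  qed
  ultimately show ?thesis by metis
qed

lemma column_forced:
  assumes "y \<in> {1..h}"
  shows "forced (c 1, y)"
proof -
  let ?p = "\<lambda>m. (c 1, Suc m)"
  have one: "1 < w" using w4 by simp
  have "forced (?p m)" if "m \<le> Suc (h - 2)" for m
  proof (rule filled_chain[where n = "h - 2", OF _ _ _ that])
    show "forced (?p 0)" "forced (?p 1)" by (auto intro: filled.init)
    fix m assume m: "m < h - 2" and "forced (?p m)" "forced (?p (Suc m))"
    show "forces grid grid_adj forced (?p (Suc m)) (?p (Suc (Suc m)))"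
    proof (rule forces_gridI[OF one one])
      show "grid_adj (c 1, Suc (Suc m)) (c 1, Suc (Suc (Suc m)))"
        using grid_adj_shift[OF one one] m unfolding cycle_adj_def by auto
      fix l y' assume l: "l < w" "y' \<in> {1..h}" "grid_adj (c 1, Suc (Suc m)) (c l, y')"
        and ne: "(l, y') \<noteq> (1, Suc (Suc (Suc m)))"
      consider "l = 1" "y' = Suc m" | "y' = Suc (Suc m)"
        using l(3) grid_adj_shift[OF one l(1)] ne m unfolding cycle_adj_def by auto
      then show "forced (c l, y')"
      proof cases
        case 1
        then show ?thesis using \<open>forced (?p m)\<close> by simp
      next
        case 2
        then show ?thesis using row_forced l(1,2) \<open>forced (?p (Suc m))\<close> by simp
      qed
    qed (use m in auto)
  qed
  moreover have "y - 1 \<le> Suc (h - 2)" "Suc (y - 1) = y" using assms h4 by auto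
  ultimately show ?thesis by metis
qed

lemma seed_zero_forcing_set: "zero_forcing_set grid grid_adj seed"
  unfolding zero_forcing_set_def
proof
  show "seed \<subseteq> grid" using shift_in_grid_iff h4 by auto
  show "\<forall>x\<in>grid. forced x"
    by (metis grid_cases column_forced row_forced)
qed

lemma card_seed: "card seed = h + 2"
proof -
  have "c 1 \<noteq> c 2" using cycle_shift_eq_iff[OF i, of 1 2] w4 by auto
  then have "{c 2} \<times> {1..h} \<inter> {(c 1, 1), (c 1, 2)} = {}" by auto
  then show ?thesis by (simp add: card_Un_disjoint card_cartesian_product)
qed

end

theorem mainTheorem6:
  fixes h w i :: nat
  assumes "h \<ge> 4" and "w \<ge> 4" and "i \<in> {1..w}"
  defines "U \<equiv> {i, i mod w + 1, (i + 1) mod w + 1}"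
  shows "zero_forcing_number (hprod_verts (cycle_verts w) (cycle_verts h))
           (hprod_adj (cycle_adj w) U (cycle_adj h)) \<le> h + 2"
proof -
  have "i - 1 + 2 = i + 1" using assms(3) by auto
  then have "U = {cycle_shift w i 0, cycle_shift w i 1, cycle_shift w i 2}"
    using assms(3) unfolding U_def cycle_shift_def by auto
  then show ?thesis
    using zero_forcing_number_le_card[OF seed_zero_forcing_set[OF assms(1-3)]]
      card_seed[OF assms(1-3)] by simp
qed

end
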